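(* Let $x_0<x_1<\cdots<x_6$ be real numbers and write $d_{i,j}=x_j-x_i$ for $i<j$. Let $y_0,\ldots,y_6$ be real numbers such that, for some $\epsilon>0$, (1) $-d_{1,2}y_0+d_{0,2}y_1-d_{0,1}y_2\ge\epsilon$, (2) $d_{3,4}y_0-d_{0,4}y_3+d_{0,3}y_4\ge\epsilon$, (3) $-d_{3,5}y_1+d_{1,5}y_3-d_{1,3}y_5\ge\epsilon$, (4) $d_{3,6}y_2-d_{2,6}y_3+d_{2,3}y_6\ge\epsilon$, (5) $d_{5,6}y_3-d_{3,6}y_5+d_{3,5}y_6\ge\epsilon$, (6) $-d_{5,6}y_4+d_{4,6}y_5-d_{4,5}y_6\ge\epsilon$. (Equivalently, with $p_i=(x_i,y_i)$: $p_1$ is strictly above $\overline{p_0p_2}$, $p_3$ is strictly below $\overline{p_0p_4}$, $p_3$ is strictly above $\overline{p_1p_5}$, $p_3$ is strictly below $\overline{p_2p_6}$, $p_5$ is strictly below $\overline{p_3p_6}$, and $p_5$ is strictly above $\overline{p_4p_6}$.) Then the visibility graph of the terrain with points $p_i=(x_i,y_i)$, $i=0,\ldots,6$, is $G'$.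
   Context: A terrain is an $x$-monotone polygonal chain with points $p_0,\ldots,p_{n-1}$ listed left to right (strictly increasing $x$-coordinates), consecutive points joined by segments. Points $p_i,p_j$ ($i<j$) see each other iff the open segment $\overline{p_ip_j}$ lies strictly above the terrain, i.e. iff $j=i+1$ or every $p_k$ with $i<k<j$ lies strictly below $\overline{p_ip_j}$. The visibility graph has vertex $v_i$ for $p_i$ and edge $\{v_i,v_j\}$ iff $p_i,p_j$ see each other. $G'$ is the graph on $v_0,\ldots,v_6$ with edge set $\{v_0v_1,v_0v_3,v_0v_4,v_0v_5,v_0v_6,v_1v_2,v_1v_3,v_1v_6,v_2v_3,v_2v_6,v_3v_4,v_3v_5,v_3v_6,v_4v_5,v_5v_6\}$. *)

theory Defs
  imports Complex_Main
begin

text \<open>A terrain is given by coordinate functions x, y : nat \<Rightarrow> real; point p_i = (x i, y i).\<close>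

definition is_terrain :: "(nat \<Rightarrow> real) \<Rightarrow> nat \<Rightarrow> bool" where
  "is_terrain x n \<longleftrightarrow> (\<forall>i. Suc i < n \<longrightarrow> x i < x (Suc i))"

definition strictly_below :: "(nat \<Rightarrow> real) \<Rightarrow> (nat \<Rightarrow> real) \<Rightarrow> nat \<Rightarrow> nat \<Rightarrow> nat \<Rightarrow> bool" where
  "strictly_below x y i j k \<longleftrightarrow>
     y k < y i + (y j - y i) * (x k - x i) / (x j - x i)"

definition sees :: "(nat \<Rightarrow> real) \<Rightarrow> (nat \<Rightarrow> real) \<Rightarrow> nat \<Rightarrow> nat \<Rightarrow> bool" where
  "sees x y i j \<longleftrightarrow> j = Suc i \<or> (\<forall>k. i < k \<and> k < j \<longrightarrow> strictly_below x y i j k)"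

definition vis_edges :: "(nat \<Rightarrow> real) \<Rightarrow> (nat \<Rightarrow> real) \<Rightarrow> nat \<Rightarrow> nat set set" where
  "vis_edges x y n = {{i, j} | i j. i < j \<and> j < n \<and> sees x y i j}"

definition G'_edges :: "nat set set" where
  "G'_edges = {{0,1},{0,3},{0,4},{0,5},{0,6},{1,2},{1,3},{1,6},{2,3},{2,6},
               {3,4},{3,5},{3,6},{4,5},{5,6}}"

end

theory Submission
  imports Defs
begin

text \<open>For points in x-order, each hypothesis compares the slopes of two consecutive
  chords of a triangle p_a p_b p_c, and by the three-chord lemma comparing two of its three
  slopes decides the order of all three. This propagates the six hypotheses to every slope
  comparison needed. Visibility is read off from slopes: p_i sees p_j iff the slope from p_i
  to p_j exceeds that to every point in between. Moreover p_i sees p_j as soon as it sees some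
  p_k below the chord p_i p_j which in turn sees p_j; so each edge of G' follows from a single
  slope comparison, and each non-edge is blocked by a single point.\<close>

definition slope :: "(nat \<Rightarrow> real) \<Rightarrow> (nat \<Rightarrow> real) \<Rightarrow> nat \<Rightarrow> nat \<Rightarrow> real" where
  "slope x y i j = (y j - y i) / (x j - x i)"

lemma is_terrain_less:
  assumes "is_terrain x n" "i < j" "j < n"
  shows "x i < x j"
  using assms(2,3)
proof (induction j rule: less_Suc_induct)
  case (1 i)
  then show ?case using assms(1) by (simp add: is_terrain_def)
next
  case (2 i j k)
  then show ?case by (meson order.strict_trans less_trans)
qed

lemma slope_three_chord:
  assumes "x a < x b" "x b < x c"
  shows "slope x y a b < slope x y a c \<longleftrightarrow> slope x y a b < slope x y b c"
    and "slope x y a c < slope x y b c \<longleftrightarrow> slope x y a b < slope x y b c"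
    and "slope x y a c < slope x y a b \<longleftrightarrow> slope x y b c < slope x y a b"
    and "slope x y b c < slope x y a c \<longleftrightarrow> slope x y b c < slope x y a b"
proof -
  define u v where "u = (x c - x b) / (x c - x a)" and "v = (x b - x a) / (x c - x a)"
  have "x b - x a \<noteq> 0" "x c - x b \<noteq> 0" "x c - x a \<noteq> 0" using assms by simp_all
  then have ac_ab: "slope x y a c - slope x y a b = u * (slope x y b c - slope x y a b)"
    and bc_ac: "slope x y b c - slope x y a c = v * (slope x y b c - slope x y a b)"
    unfolding slope_def u_def v_def by (simp_all add: divide_simps) (simp_all add: algebra_simps)
  have "u > 0" "v > 0" using assms by (simp_all add: u_def v_def)
  then have "0 < slope x y a c - slope x y a b \<longleftrightarrow> 0 < slope x y b c - slope x y a b"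
    and "0 < slope x y b c - slope x y a c \<longleftrightarrow> 0 < slope x y b c - slope x y a b"
    and "slope x y a c - slope x y a b < 0 \<longleftrightarrow> slope x y b c - slope x y a b < 0"
    and "slope x y b c - slope x y a c < 0 \<longleftrightarrow> slope x y b c - slope x y a b < 0"
    unfolding ac_ab bc_ac by (simp_all add: zero_less_mult_iff mult_less_0_iff)
  then show "slope x y a b < slope x y a c \<longleftrightarrow> slope x y a b < slope x y b c"
    and "slope x y a c < slope x y b c \<longleftrightarrow> slope x y a b < slope x y b c"
    and "slope x y a c < slope x y a b \<longleftrightarrow> slope x y b c < slope x y a b"
    and "slope x y b c < slope x y a c \<longleftrightarrow> slope x y b c < slope x y a b"
    by simp_all
qed

lemma turn_eq_slope_diff:
  assumes "x a < x b" "x b < x c"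
  shows "(x c - x b) * y a - (x c - x a) * y b + (x b - x a) * y c
           = (x b - x a) * (x c - x b) * (slope x y b c - slope x y a b)"
proof -
  have "x b - x a \<noteq> 0" "x c - x b \<noteq> 0" using assms by simp_all
  then show ?thesis unfolding slope_def by (simp add: divide_simps) (simp add: algebra_simps)
qed

lemma turn_sign_iff_slope_less:
  assumes "x a < x b" "x b < x c"
  shows "0 < (x c - x b) * y a - (x c - x a) * y b + (x b - x a) * y c
           \<longleftrightarrow> slope x y a b < slope x y b c"
    and "(x c - x b) * y a - (x c - x a) * y b + (x b - x a) * y c < 0
           \<longleftrightarrow> slope x y b c < slope x y a b"
  using assms by (simp_all add: turn_eq_slope_diff zero_less_mult_iff mult_less_0_iff)

lemma strictly_below_iff_slope_less:
  assumes "x i < x k"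
  shows "strictly_below x y i j k \<longleftrightarrow> slope x y i k < slope x y i j"
proof -
  have "strictly_below x y i j k \<longleftrightarrow> y k - y i < slope x y i j * (x k - x i)"
    by (simp add: strictly_below_def slope_def algebra_simps)
  also have "\<dots> \<longleftrightarrow> slope x y i k < slope x y i j"
    using assms by (simp add: slope_def pos_divide_less_eq)
  finally show ?thesis .
qed

lemma sees_iff_all_below:
  "sees x y i j \<longleftrightarrow> (\<forall>k. i < k \<and> k < j \<longrightarrow> strictly_below x y i j k)"
  by (auto simp: sees_def)

lemma not_sees_if_blocked:
  assumes "i < k" "k < j" "\<not> strictly_below x y i j k"
  shows "\<not> sees x y i j"
  using assms by (auto simp: sees_iff_all_below)

lemma sees_via_point_below:
  assumes terrain: "is_terrain x n" and "j < n" "i < k" "k < j"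
    and ik: "sees x y i k" and kj: "sees x y k j" and below: "strictly_below x y i j k"
  shows "sees x y i j"
  unfolding sees_iff_all_below
proof (intro allI impI)
  fix m assume m: "i < m \<and> m < j"
  have x_less: "x p < x q" if "p < q" "q \<le> j" for p q
    using is_terrain_less[OF terrain that(1)] that \<open>j < n\<close> by simp
  have ik_ij: "slope x y i k < slope x y i j"
    using below x_less \<open>i < k\<close> \<open>k < j\<close> by (simp add: strictly_below_iff_slope_less)
  consider "m < k" | "m = k" | "k < m" by linarith
  then show "strictly_below x y i j m"
  proof cases
    case 1
    then have "slope x y i m < slope x y i k"
      using ik m x_less \<open>k < j\<close> by (simp add: sees_iff_all_below strictly_below_iff_slope_less)
    then show ?thesis using ik_ij m x_less by (simp add: strictly_below_iff_slope_less)
  next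
    case 2
    then show ?thesis using below by simp
  next
    case 3
    then have "slope x y k m < slope x y k j"
      using kj m x_less by (simp add: sees_iff_all_below strictly_below_iff_slope_less)
    then have "slope x y k j < slope x y m j"
      using slope_three_chord(1,2)[of x k m j y] x_less 3 m by simp
    moreover have "slope x y i j < slope x y k j"
      using ik_ij slope_three_chord(1,2)[of x i k j y] x_less \<open>i < k\<close> \<open>k < j\<close> by simp
    ultimately show ?thesis
      using slope_three_chord(1,2)[of x i m j y] x_less m
      by (simp add: strictly_below_iff_slope_less)
  qed
qed

lemma in_vis_edgesI: "i < j \<Longrightarrow> j < n \<Longrightarrow> sees x y i j \<Longrightarrow> {i, j} \<in> vis_edges x y n"
  unfolding vis_edges_def by blast

locale G'_terrain =
  fixes x y :: "nat \<Rightarrow> real"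
  assumes terrain: "is_terrain x 7"
    and p1_above_p0p2: "slope x y 1 2 < slope x y 0 1"
    and p3_below_p0p4: "slope x y 0 3 < slope x y 3 4"
    and p3_above_p1p5: "slope x y 3 5 < slope x y 1 3"
    and p3_below_p2p6: "slope x y 2 3 < slope x y 3 6"
    and p5_below_p3p6: "slope x y 3 5 < slope x y 5 6"
    and p5_above_p4p6: "slope x y 5 6 < slope x y 4 5"
begin

abbreviation s :: "nat \<Rightarrow> nat \<Rightarrow> real" where
  "s \<equiv> slope x y"

lemma x_less: "i < j \<Longrightarrow> j < 7 \<Longrightarrow> x i < x j"
  using is_terrain_less[OF terrain] .

lemma slope_chord:
  assumes "a < b" "b < c" "c < 7"
  shows "s a b < s a c \<longleftrightarrow> s a b < s b c"
    and "s a c < s b c \<longleftrightarrow> s a b < s b c"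
    and "s a c < s a b \<longleftrightarrow> s b c < s a b"
    and "s b c < s a c \<longleftrightarrow> s b c < s a b"
  using slope_three_chord[of x a b c y] x_less assms by simp_all

lemma slope_comparisons:
  shows "s 1 2 < s 1 3" "s 0 1 < s 0 3" "s 0 3 < s 0 4" "s 3 4 < s 3 5" "s 0 3 < s 0 5"
    and "s 3 5 < s 3 6" "s 0 3 < s 0 6" "s 2 3 < s 2 6" "s 1 3 < s 1 6"
    and "s 0 2 < s 0 1" "s 1 4 < s 1 3" "s 1 5 < s 1 3" "s 2 4 < s 2 3" "s 2 5 < s 2 3"
    and "s 4 6 < s 4 5"
proof -
  have 356: "s 3 5 < s 3 6" using slope_chord(1)[of 3 5 6] p5_below_p3p6 by simp
  have 345: "s 3 4 < s 4 5" "s 3 4 < s 3 5"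
    using slope_chord(1,2)[of 3 4 5] p5_below_p3p6 p5_above_p4p6 by simp_all
  have 013: "s 0 1 < s 1 3" "s 0 1 < s 0 3"
    using slope_chord(1,2)[of 0 1 3] p3_below_p0p4 p3_above_p1p5 345 by simp_all
  have 123: "s 1 2 < s 1 3" "s 1 3 < s 2 3"
    using slope_chord(1,2)[of 1 2 3] p1_above_p0p2 013 by simp_all
  show "s 1 2 < s 1 3" "s 0 1 < s 0 3" "s 3 4 < s 3 5" "s 3 5 < s 3 6"
    using 356 345 013 123 by simp_all
  show "s 0 3 < s 0 4" "s 0 3 < s 0 5" "s 0 3 < s 0 6"
    using slope_chord(1)[of 0 3 4] slope_chord(1)[of 0 3 5] slope_chord(1)[of 0 3 6]
      p3_below_p0p4 356 345 by simp_all
  show "s 2 3 < s 2 6" "s 1 3 < s 1 6"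
    using slope_chord(1)[of 2 3 6] slope_chord(1)[of 1 3 6] p3_below_p2p6 123 by simp_all
  show "s 0 2 < s 0 1" "s 1 4 < s 1 3" "s 1 5 < s 1 3" "s 2 4 < s 2 3" "s 2 5 < s 2 3"
      "s 4 6 < s 4 5"
    using slope_chord(3)[of 0 1 2] slope_chord(3)[of 1 3 4] slope_chord(3)[of 1 3 5]
      slope_chord(3)[of 2 3 4] slope_chord(3)[of 2 3 5] slope_chord(3)[of 4 5 6]
      p1_above_p0p2 p3_above_p1p5 p5_above_p4p6 345 123
    by simp_all
qed

lemma sees_via: "i < k \<Longrightarrow> k < j \<Longrightarrow> j < 7 \<Longrightarrow> sees x y i k \<Longrightarrow> sees x y k j
    \<Longrightarrow> s i k < s i j \<Longrightarrow> sees x y i j"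
  using sees_via_point_below[OF terrain] strictly_below_iff_slope_less x_less by simp

lemma not_sees_blocked: "i < k \<Longrightarrow> k < j \<Longrightarrow> j < 7 \<Longrightarrow> s i j < s i k \<Longrightarrow> \<not> sees x y i j"
  using not_sees_if_blocked strictly_below_iff_slope_less x_less by simp

lemma sees_G'_pairs:
  shows "sees x y 0 1" "sees x y 1 2" "sees x y 2 3" "sees x y 3 4" "sees x y 4 5" "sees x y 5 6"
    and "sees x y 1 3" "sees x y 0 3" "sees x y 0 4" "sees x y 3 5" "sees x y 0 5"
    and "sees x y 3 6" "sees x y 0 6" "sees x y 1 6" "sees x y 2 6"
proof -
  show adjacent: "sees x y 0 1" "sees x y 1 2" "sees x y 2 3" "sees x y 3 4" "sees x y 4 5"
      "sees x y 5 6"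
    by (simp_all add: sees_def)
  show 13: "sees x y 1 3" using sees_via[of 1 2 3] adjacent slope_comparisons by simp
  show 03: "sees x y 0 3" using sees_via[of 0 1 3] adjacent 13 slope_comparisons by simp
  show "sees x y 0 4" using sees_via[of 0 3 4] adjacent 03 slope_comparisons by simp
  show 35: "sees x y 3 5" using sees_via[of 3 4 5] adjacent slope_comparisons by simp
  show "sees x y 0 5" using sees_via[of 0 3 5] 03 35 slope_comparisons by simp
  show 36: "sees x y 3 6" using sees_via[of 3 5 6] adjacent 35 slope_comparisons by simp
  show "sees x y 0 6" "sees x y 1 6" "sees x y 2 6"
    using sees_via[of 0 3 6] sees_via[of 1 3 6] sees_via[of 2 3 6] adjacent 03 13 36
      slope_comparisons
    by simp_all
qed

lemma not_sees_non_G'_pairs: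
  shows "\<not> sees x y 0 2" "\<not> sees x y 1 4" "\<not> sees x y 1 5" "\<not> sees x y 2 4"
    "\<not> sees x y 2 5" "\<not> sees x y 4 6"
  using not_sees_blocked[of 0 1 2] not_sees_blocked[of 1 3 4] not_sees_blocked[of 1 3 5]
    not_sees_blocked[of 2 3 4] not_sees_blocked[of 2 3 5] not_sees_blocked[of 4 5 6]
    slope_comparisons
  by simp_all

lemma vis_edges_eq_G'_edges: "vis_edges x y 7 = G'_edges"
proof
  have "{i, j} \<in> G'_edges" if "i < j" "j < 7" "sees x y i j" for i j
  proof -
    have "i = 0 \<or> i = 1 \<or> i = 2 \<or> i = 3 \<or> i = 4 \<or> i = 5"
      and "j = 1 \<or> j = 2 \<or> j = 3 \<or> j = 4 \<or> j = 5 \<or> j = 6"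
      using that(1,2) by linarith+
    then show ?thesis using that not_sees_non_G'_pairs unfolding G'_edges_def
      by (elim disjE) simp_all
  qed
  then show "vis_edges x y 7 \<subseteq> G'_edges" by (auto simp: vis_edges_def)
  show "G'_edges \<subseteq> vis_edges x y 7"
    using sees_G'_pairs by (simp add: G'_edges_def in_vis_edgesI)
qed

end

theorem lemma1:
  fixes x y :: "nat \<Rightarrow> real" and \<epsilon> :: real
  assumes terrain: "is_terrain x 7"
    and eps: "\<epsilon> > 0"
    and h1: "- (x 2 - x 1) * y 0 + (x 2 - x 0) * y 1 - (x 1 - x 0) * y 2 \<ge> \<epsilon>"
    and h2: "(x 4 - x 3) * y 0 - (x 4 - x 0) * y 3 + (x 3 - x 0) * y 4 \<ge> \<epsilon>"
    and h3: "- (x 5 - x 3) * y 1 + (x 5 - x 1) * y 3 - (x 3 - x 1) * y 5 \<ge> \<epsilon>"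
    and h4: "(x 6 - x 3) * y 2 - (x 6 - x 2) * y 3 + (x 3 - x 2) * y 6 \<ge> \<epsilon>"
    and h5: "(x 6 - x 5) * y 3 - (x 6 - x 3) * y 5 + (x 5 - x 3) * y 6 \<ge> \<epsilon>"
    and h6: "- (x 6 - x 5) * y 4 + (x 6 - x 4) * y 5 - (x 5 - x 4) * y 6 \<ge> \<epsilon>"
  shows "vis_edges x y 7 = G'_edges"
proof -
  note x_less = is_terrain_less[OF terrain]
  have "(x 2 - x 1) * y 0 - (x 2 - x 0) * y 1 + (x 1 - x 0) * y 2 < 0"
    and "(x 5 - x 3) * y 1 - (x 5 - x 1) * y 3 + (x 3 - x 1) * y 5 < 0"
    and "(x 6 - x 5) * y 4 - (x 6 - x 4) * y 5 + (x 5 - x 4) * y 6 < 0"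
    using h1 h3 h6 eps by linarith+
  then have "slope x y 1 2 < slope x y 0 1" "slope x y 3 5 < slope x y 1 3"
    "slope x y 5 6 < slope x y 4 5"
    using turn_sign_iff_slope_less(2)[of x 0 1 2 y] turn_sign_iff_slope_less(2)[of x 1 3 5 y]
      turn_sign_iff_slope_less(2)[of x 4 5 6 y] x_less
    by simp_all
  moreover have "slope x y 0 3 < slope x y 3 4" "slope x y 2 3 < slope x y 3 6"
    "slope x y 3 5 < slope x y 5 6"
    using turn_sign_iff_slope_less(1)[of x 0 3 4 y] turn_sign_iff_slope_less(1)[of x 2 3 6 y]
      turn_sign_iff_slope_less(1)[of x 3 5 6 y] x_less h2 h4 h5 eps
    by simp_all
  ultimately interpret G'_terrain x y
    using terrain by unfold_locales
  show ?thesis by (fact vis_edges_eq_G'_edges)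
qed

end
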